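(* For positive integers $r,c$, let $R_{r,c}=(c^r)$ be the rectangular partition with $r$ parts all equal to $c$. Then $$\mathbb{SG}(\mathcal{L}(R_{r,c}))=\begin{cases}0 & c>1,\ r>1,\ c+r\text{ even},\\ 2 & (c\le2\text{ or } r\le2)\text{ and } c+r \text{ odd},\\ 1&\text{otherwise}.\end{cases}$$
   Context: A partition is a finite non-increasing sequence of positive integers; $()$ is the empty partition. For non-negative $i,j$, $\lambda[i,j]$ is $(\lambda_{i+1}-j,\dots,\lambda_r-j)$ with all non-positive entries removed. LCTR: positions $\mathcal{L}(\lambda)$; if $\lambda\neq()$ the two moves go to $\mathcal{L}(\lambda[1,0])$ and $\mathcal{L}(\lambda[0,1])$; $\mathcal{L}(())$ is terminal. Normal play; $\mathbb{SG}(A)=\operatorname{mex}\{\mathbb{SG}(B):A\to B\}$. *)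

theory Defs
  imports Main
begin

text \<open>Partitions are represented as lists of naturals (non-increasing, positive entries).
  shift i j lam is lambda[i,j]: drop the first i parts, subtract j from the rest,
  and remove all non-positive entries.\<close>

definition shift :: "nat \<Rightarrow> nat \<Rightarrow> nat list \<Rightarrow> nat list" where
  "shift i j lam = filter (\<lambda>y. 0 < y) (map (\<lambda>y. y - j) (drop i lam))"

definition mex :: "nat set \<Rightarrow> nat" where
  "mex S = (LEAST n. n \<notin> S)"

definition is_partition :: "nat list \<Rightarrow> bool" where
  "is_partition lam \<longleftrightarrow> sorted_wrt (\<ge>) lam \<and> (\<forall>x\<in>set lam. 0 < x)"

function lctr_sg :: "nat list \<Rightarrow> nat" where
  "lctr_sg [] = 0"
| "lctr_sg (x # xs) =
     mex {lctr_sg (shift 1 0 (x # xs)), lctr_sg (shift 0 1 (x # xs))}"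
  by pat_completeness auto
termination
proof (relation "measure (\<lambda>l. length l + sum_list l)")
  fix x :: nat and xs
  have B: "length (filter (\<lambda>y. 0 < y) xs) + sum_list (filter (\<lambda>y. 0 < y) xs)
        \<le> length xs + sum_list xs" for xs :: "nat list"
    by (induction xs) auto
  show "(shift 1 0 (x # xs), x # xs) \<in> measure (\<lambda>l. length l + sum_list l)"
    using B[of xs] by (simp add: shift_def)
next
  fix x :: nat and xs :: "nat list"
  have A: "length (filter (\<lambda>y. 0 < y) (map (\<lambda>y. y - 1) xs))
          + sum_list (filter (\<lambda>y. 0 < y) (map (\<lambda>y. y - 1) xs))
        \<le> length xs + sum_list xs" for xs :: "nat list"
    by (induction xs) auto
  show "(shift 0 1 (x # xs), x # xs) \<in> measure (\<lambda>l. length l + sum_list l)"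
    using A[of xs] by (cases x) (auto simp: shift_def)
qed auto

end

theory Submission
  imports Defs
begin

text \<open>Both moves of LCTR keep a rectangle a rectangle: deleting the first row of \<open>(c^r)\<close> gives
  \<open>(c^(r-1))\<close> and shortening every row gives \<open>((c-1)^r)\<close>. Hence the Sprague-Grundy value
  \<open>g(r,c)\<close> of the rectangle satisfies \<open>g(r,c) = mex {g(r-1,c), g(r,c-1)}\<close>, with \<open>g = 0\<close> when
  \<open>r = 0\<close> or \<open>c = 0\<close> (the empty partition), and the closed form is checked to satisfy the same
  recurrence by a case analysis on parity and on \<open>r, c \<le> 2\<close>.\<close>

lemma mex_doubleton:
  "mex {a, b} = (if a \<noteq> 0 \<and> b \<noteq> 0 then 0 else if a \<noteq> 1 \<and> b \<noteq> 1 then 1 else 2)"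
  unfolding mex_def
  by (rule Least_equality) (auto simp: not_less_eq_eq le_Suc_eq)

definition rectangle :: "nat \<Rightarrow> nat \<Rightarrow> nat list" where
  "rectangle r c = (if c = 0 then [] else replicate r c)"

lemma shift_1_0_rectangle: "shift 1 0 (rectangle r c) = rectangle (r - 1) c"
  by (cases r) (auto simp: shift_def rectangle_def)

lemma shift_0_1_rectangle: "shift 0 1 (rectangle r c) = rectangle r (c - 1)"
  by (induction r) (auto simp: shift_def rectangle_def)

lemma lctr_sg_rectangle_rec:
  assumes "0 < r" and "0 < c"
  shows "lctr_sg (rectangle r c) =
    mex {lctr_sg (rectangle (r - 1) c), lctr_sg (rectangle r (c - 1))}"
proof -
  obtain r' where "rectangle r c = c # replicate r' c"
    using assms by (cases r) (auto simp: rectangle_def)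
  then show ?thesis
    by (metis lctr_sg.simps(2) shift_0_1_rectangle shift_1_0_rectangle)
qed

definition rectangle_sg :: "nat \<Rightarrow> nat \<Rightarrow> nat" where
  "rectangle_sg r c =
    (if r = 0 \<or> c = 0 then 0
     else if c > 1 \<and> r > 1 \<and> even (c + r) then 0
     else if (c \<le> 2 \<or> r \<le> 2) \<and> odd (c + r) then 2
     else 1)"

lemma rectangle_sg_rec:
  assumes "0 < r" and "0 < c"
  shows "rectangle_sg r c = mex {rectangle_sg (r - 1) c, rectangle_sg r (c - 1)}"
  using assms unfolding mex_doubleton rectangle_sg_def
  by (cases "r = 1"; cases "c = 1"; cases "r = 2"; cases "c = 2"; simp; presburger)

lemma lctr_sg_rectangle: "lctr_sg (rectangle r c) = rectangle_sg r c"
proof (induction "r + c" arbitrary: r c rule: less_induct)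
  case less
  show ?case
  proof (cases "r = 0 \<or> c = 0")
    case True
    then show ?thesis by (auto simp: rectangle_def rectangle_sg_def)
  next
    case False
    then have "0 < r" "0 < c" by auto
    then show ?thesis
      using less lctr_sg_rectangle_rec rectangle_sg_rec by simp
  qed
qed

theorem mainTheorem12:
  fixes r c :: nat
  assumes "0 < r" and "0 < c"
  shows "lctr_sg (replicate r c) =
    (if c > 1 \<and> r > 1 \<and> even (c + r) then 0
     else if (c \<le> 2 \<or> r \<le> 2) \<and> odd (c + r) then 2
     else 1)"
  using lctr_sg_rectangle[of r c] assms by (simp add: rectangle_def rectangle_sg_def)

end
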